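(* Let $n\ge 2$, $A\in\mathrm{Mat}_{n\times n}(\mathbb{R})$, and let $q\in\mathbb{R}^n$ be a formal equilibrium of the replicator vector field $X_A$. Let $B=-EAE^t$, $\eta_q(u)_i=q_i-\frac{e^{u_i}}{1+\sum_{j=1}^{n-1}e^{u_j}}$ ($u\in\mathbb{R}^{n-1}$), and $\tilde X_B(u)=B\eta_q(u)$. Suppose $D=(d_{ij})\in\mathrm{Mat}_{(n-1)\times(n-1)}(\mathbb{R})$ satisfies: (1) $DB$ is anti-symmetric; (2) $D^tQ_1$ is diagonal, where $(Q_1)_{ij}=q_i-\delta_{ij}$ (equivalently, the 1-form $(1+\sum_i e^{u_i})D^t\eta_q(u)$ is closed). Let $$H_D(u)=\sum_{i=1}^{n-1}\Big(\sum_{k=1}^{n-1}d_{ki}q_k\Big)u_i+\sum_{i=1}^{n-1}\Big(\Big(\sum_{k=1}^{n-1}d_{ki}q_k\Big)-d_{ii}\Big)e^{u_i},$$ $\mathbf{B}(u)=(1+\sum_{i=1}^{n-1}e^{u_i})B$, $\mathbf{D}^t(u)=(1+\sum_{i=1}^{n-1}e^{u_i})D^t$, and $\tilde Y_B=(1+\sum_{i=1}^{n-1}e^{u_i})\tilde X_B$. Then $L_{(\mathbf{B},\mathbf{D}^t)}=\{(\mathbf{B}(u)z,\mathbf{D}^t(u)z): z\in\mathbb{R}^{n-1}\}$ is a big-isotropic structure on $\mathbb{R}^{n-1}$ (a Dirac structure when $\ker B\cap\ker D^t=\{0\}$), and $(\tilde Y_B,dH_D)$ is a Hamiltonian system with respect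 to it, i.e. $(\tilde Y_B,dH_D)$ is a section of $L_{(\mathbf{B},\mathbf{D}^t)}$.
   Context: The replicator vector field is $X_A(x)_i=x_i((Ax)_i-x^tAx)$ on $\Delta^{n-1}=\{x\in\mathbb{R}^n_{\ge0}:\sum x_i=1\}$. A formal equilibrium is $q\in\mathbb{R}^n$ with $\sum_i q_i=1$ and $(Aq)_i=(Aq)_j$ for all $i,j$. $E=[-I_{n-1}\mid\mathbb{1}]$ ($(n-1)\times n$). $\tilde X_B$ is the pullback of $X_A$ to $\mathbb{R}^{n-1}$ by $\phi(u)=\big(\frac{e^{u_1}}{1+\sum_j e^{u_j}},\dots,\frac{e^{u_{n-1}}}{1+\sum_j e^{u_j}},\frac{1}{1+\sum_j e^{u_j}}\big)$. On $\mathbb{T}M=TM\oplus T^*M$ use the pairing $\frac12(\beta(X)+\alpha(Y))$ and Courant bracket $\big([X,Y],\mathcal{L}_X\beta-\mathcal{L}_Y\alpha+\frac12 d(\alpha(Y)-\beta(X))\big)$; a big-isotropic structure is an isotropic subbundle closed under the Courant bracket, a Dirac structure a maximal isotropic one closed under the bracket. A vector field $X$ is Hamiltonian with Hamiltonian $H$ with respect to such $L$ if $(X,dH)\in L$. *)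

theory Defs
  imports "HOL-Analysis.Analysis"
begin

text \<open>The phase space R^(n-1) is real^'m (so n-1 = CARD('m) >= 1, i.e. n >= 2).
  R^n is real^('m option): index Some i is the i-th coordinate (i = 1..n-1) and
  None is the n-th (last) coordinate. Tangent vectors and covectors at a point of
  R^(n-1) are both represented by elements of real^'m, covectors acting by inner product.\<close>

definition formal_equilibrium :: "real^'n^'n \<Rightarrow> real^'n \<Rightarrow> bool" where
  "formal_equilibrium A q \<longleftrightarrow> sum (\<lambda>i. q $ i) UNIV = 1 \<and> (\<forall>i j. (A *v q) $ i = (A *v q) $ j)"

text \<open>E = [-I_(n-1) | 1], an (n-1) x n matrix.\<close>
definition Emat :: "real^('m option)^'m" where
  "Emat = (\<chi> i j. if j = Some i then -1 else if j = None then 1 else 0)"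

definition Bmat :: "real^('m option)^('m option) \<Rightarrow> real^'m^'m" where
  "Bmat A = - (Emat ** A ** transpose Emat)"

definition esum :: "real^'m \<Rightarrow> real" where
  "esum u = 1 + (\<Sum>j\<in>UNIV. exp (u $ j))"

definition eta :: "real^('m option) \<Rightarrow> real^'m \<Rightarrow> real^'m" where
  "eta q u = (\<chi> i. q $ Some i - exp (u $ i) / esum u)"

definition Xtilde :: "real^('m option)^('m option) \<Rightarrow> real^('m option) \<Rightarrow> real^'m \<Rightarrow> real^'m" where
  "Xtilde A q u = Bmat A *v eta q u"

definition Ytilde :: "real^('m option)^('m option) \<Rightarrow> real^('m option) \<Rightarrow> real^'m \<Rightarrow> real^'m" where
  "Ytilde A q u = esum u *\<^sub>R Xtilde A q u"

definition Q1 :: "real^('m option) \<Rightarrow> real^'m^'m" where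
  "Q1 q = (\<chi> i j. q $ Some i - (if i = j then 1 else 0))"

definition is_diagonal :: "real^'m^'m \<Rightarrow> bool" where
  "is_diagonal M \<longleftrightarrow> (\<forall>i j. i \<noteq> j \<longrightarrow> M $ i $ j = 0)"

definition antisymmetric_mat :: "real^'m^'m \<Rightarrow> bool" where
  "antisymmetric_mat M \<longleftrightarrow> transpose M = - M"

definition H_D :: "real^'m^'m \<Rightarrow> real^('m option) \<Rightarrow> real^'m \<Rightarrow> real" where
  "H_D D q u = (\<Sum>i\<in>UNIV. (\<Sum>k\<in>UNIV. D $ k $ i * q $ Some k) * u $ i)
             + (\<Sum>i\<in>UNIV. ((\<Sum>k\<in>UNIV. D $ k $ i * q $ Some k) - D $ i $ i) * exp (u $ i))"

definition L_BD :: "real^'m^'m \<Rightarrow> real^'m^'m \<Rightarrow> real^'m \<Rightarrow> ((real^'m) \<times> (real^'m)) set" where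
  "L_BD B D u = {(esum u *\<^sub>R (B *v z), esum u *\<^sub>R (transpose D *v z)) | z. True}"

definition pderiv_at :: "(real^'m \<Rightarrow> 'b::real_normed_vector) \<Rightarrow> 'm \<Rightarrow> real^'m \<Rightarrow> 'b" where
  "pderiv_at f i x = frechet_derivative f (at x) (axis i 1)"

fun Ck :: "nat \<Rightarrow> (real^'m \<Rightarrow> real^'k) \<Rightarrow> bool" where
  "Ck 0 f = continuous_on UNIV f"
| "Ck (Suc k) f = ((\<forall>x. f differentiable (at x)) \<and> (\<forall>i. Ck k (pderiv_at f i)))"

definition smooth :: "(real^'m \<Rightarrow> real^'k) \<Rightarrow> bool" where
  "smooth f \<longleftrightarrow> (\<forall>k. Ck k f)"

definition lie_bracket :: "(real^'m \<Rightarrow> real^'m) \<Rightarrow> (real^'m \<Rightarrow> real^'m) \<Rightarrow> real^'m \<Rightarrow> real^'m" where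
  "lie_bracket X Y x = frechet_derivative Y (at x) (X x) - frechet_derivative X (at x) (Y x)"

definition lie_deriv_form :: "(real^'m \<Rightarrow> real^'m) \<Rightarrow> (real^'m \<Rightarrow> real^'m) \<Rightarrow> real^'m \<Rightarrow> real^'m" where
  "lie_deriv_form X b x = frechet_derivative b (at x) (X x) + (\<chi> i. b x \<bullet> pderiv_at X i x)"

definition dfun :: "(real^'m \<Rightarrow> real) \<Rightarrow> real^'m \<Rightarrow> real^'m" where
  "dfun f x = (\<chi> i. pderiv_at f i x)"

definition courant :: "(real^'m \<Rightarrow> (real^'m) \<times> (real^'m)) \<Rightarrow> (real^'m \<Rightarrow> (real^'m) \<times> (real^'m))
     \<Rightarrow> real^'m \<Rightarrow> (real^'m) \<times> (real^'m)" where
  "courant s1 s2 x =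
     (let X = fst \<circ> s1; a = snd \<circ> s1; Y = fst \<circ> s2; b = snd \<circ> s2 in
      (lie_bracket X Y x,
       lie_deriv_form X b x - lie_deriv_form Y a x
         + (1/2) *\<^sub>R dfun (\<lambda>y. a y \<bullet> Y y - b y \<bullet> X y) x))"

definition pairing :: "(real^'m) \<times> (real^'m) \<Rightarrow> (real^'m) \<times> (real^'m) \<Rightarrow> real" where
  "pairing p1 p2 = (1/2) * (snd p2 \<bullet> fst p1 + snd p1 \<bullet> fst p2)"

definition smooth_section :: "(real^'m \<Rightarrow> ((real^'m) \<times> (real^'m)) set) \<Rightarrow> (real^'m \<Rightarrow> (real^'m) \<times> (real^'m)) \<Rightarrow> bool" where
  "smooth_section L s \<longleftrightarrow> smooth (fst \<circ> s) \<and> smooth (snd \<circ> s) \<and> (\<forall>x. s x \<in> L x)"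

text \<open>Smooth subbundle: linear fibres of constant dimension, every vector of a fibre
  extends to a smooth section (hence local smooth frames exist).\<close>
definition smooth_subbundle :: "(real^'m \<Rightarrow> ((real^'m) \<times> (real^'m)) set) \<Rightarrow> bool" where
  "smooth_subbundle L \<longleftrightarrow> (\<forall>x. subspace (L x)) \<and> (\<forall>x y. dim (L x) = dim (L y))
     \<and> (\<forall>x w. w \<in> L x \<longrightarrow> (\<exists>s. smooth_section L s \<and> s x = w))"

definition isotropic :: "((real^'m) \<times> (real^'m)) set \<Rightarrow> bool" where
  "isotropic W \<longleftrightarrow> (\<forall>p\<in>W. \<forall>p'\<in>W. pairing p p' = 0)"

definition courant_closed :: "(real^'m \<Rightarrow> ((real^'m) \<times> (real^'m)) set) \<Rightarrow> bool" where
  "courant_closed L \<longleftrightarrow> (\<forall>s1 s2. smooth_section L s1 \<longrightarrow> smooth_section L s2 \<longrightarrow>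
       (\<forall>x. courant s1 s2 x \<in> L x))"

definition big_isotropic :: "(real^'m \<Rightarrow> ((real^'m) \<times> (real^'m)) set) \<Rightarrow> bool" where
  "big_isotropic L \<longleftrightarrow> smooth_subbundle L \<and> (\<forall>x. isotropic (L x)) \<and> courant_closed L"

definition maximal_isotropic :: "((real^'m) \<times> (real^'m)) set \<Rightarrow> bool" where
  "maximal_isotropic W \<longleftrightarrow> isotropic W \<and>
     (\<forall>V. subspace V \<longrightarrow> W \<subseteq> V \<longrightarrow> isotropic V \<longrightarrow> V = W)"

definition dirac :: "(real^'m \<Rightarrow> ((real^'m) \<times> (real^'m)) set) \<Rightarrow> bool" where
  "dirac L \<longleftrightarrow> big_isotropic L \<and> (\<forall>x. maximal_isotropic (L x))"

end

theory Submission imports Defs begin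

text \<open>Since 1 + \<Sum>i. exp u_i > 0, every fibre of L_(B,D^t) is the same subspace
  W = {(B z, D^t z)}, which is isotropic because DB is antisymmetric. For two sections of a
  constant isotropic subspace, differentiating the isotropy relations shows that the Courant
  bracket collapses to Ds_2(X_1) - Ds_1(X_2), which again lies in W. An isotropic subspace of
  R^m \<times> R^m has dimension at most m, and W has dimension m when ker B \<inter> ker D^t = 0, so it is
  then maximal. Finally, condition (2) says that all off-diagonal entries in column i of D equal
  c_i = \<Sum>k. d_ki q_k; with this, (1 + \<Sum>i. exp u_i) D^t \<eta>_q(u) is exactly the gradient of H_D,
  and z = \<eta>_q(u) exhibits (Y_B(u), dH_D(u)) as a point of L_(B,D^t).\<close>

lemma inner_transpose_matrix_vector:
  "(transpose M *v x) \<bullet> (y::real^'n) = x \<bullet> (M *v y)"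
  by (simp add: transpose_matrix_vector dot_lmul_matrix)

lemma dfun_eq_partials:
  assumes "(f has_derivative f') (at x)"
  shows "dfun f x = (\<chi> i. f' (axis i 1))"
  using frechet_derivative_at[OF assms] by (simp add: dfun_def pderiv_at_def)

lemma dfun_eq_gradient:
  assumes "(f has_derivative (\<lambda>v. g \<bullet> v)) (at x)"
  shows "dfun f x = g"
  using dfun_eq_partials[OF assms] by (simp add: inner_axis vec_eq_iff)

lemma Ck_const: "Ck k (\<lambda>x::real^'m. c :: real^'k)"
proof (induction k arbitrary: c)
  case 0
  then show ?case by simp
next
  case (Suc k)
  have "pderiv_at (\<lambda>x::real^'m. c) i = (\<lambda>x. 0)" for i
    using frechet_derivative_at[OF has_derivative_const] by (auto simp: pderiv_at_def)
  then show ?case using Suc by simp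
qed

lemma smooth_const: "smooth (\<lambda>x::real^'m. c :: real^'k)"
  by (simp add: smooth_def Ck_const)

lemma smooth_has_derivative:
  "smooth f \<Longrightarrow> (f has_derivative frechet_derivative f (at x)) (at x)"
  unfolding smooth_def by (metis Ck.simps(2) frechet_derivative_works)

lemma smooth_section_has_derivative:
  assumes "smooth_section L s"
  shows "(s has_derivative (\<lambda>h. (frechet_derivative (fst \<circ> s) (at x) h,
                                   frechet_derivative (snd \<circ> s) (at x) h))) (at x)"
proof -
  have "(fst \<circ> s has_derivative frechet_derivative (fst \<circ> s) (at x)) (at x)"
    and "(snd \<circ> s has_derivative frechet_derivative (snd \<circ> s) (at x)) (at x)"
    using assms smooth_has_derivative unfolding smooth_section_def by blast+
  from has_derivative_Pair[OF this] show ?thesis by simp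
qed

text \<open>The component z of F' h orthogonal to W is the derivative of z \<bullet> F = 0.\<close>
lemma has_derivative_in_subspace:
  fixes F :: "'a::real_normed_vector \<Rightarrow> 'b::euclidean_space"
  assumes W: "subspace W" and FW: "\<And>y. F y \<in> W" and F': "(F has_derivative F') (at x)"
  shows "F' h \<in> W"
proof -
  obtain y z where y: "y \<in> span W" and orth: "\<And>w. w \<in> span W \<Longrightarrow> orthogonal z w"
    and decomp: "F' h = y + z"
    using orthogonal_subspace_decomp_exists[of W "F' h"] by blast
  have "z \<bullet> F t = 0" for t
    using orth[OF span_base[OF FW[of t]]] by (simp add: orthogonal_def)
  then have "((\<lambda>t. z \<bullet> F t) has_derivative (\<lambda>h. 0)) (at x)" by simp
  with has_derivative_inner_right[OF F', of z] have "(\<lambda>h. z \<bullet> F' h) = (\<lambda>h. 0)"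
    by (rule has_derivative_unique)
  moreover have "z \<bullet> y = 0" using orth[OF y] by (simp add: orthogonal_def)
  ultimately have "z \<bullet> z = 0" by (metis decomp inner_add_right add_0)
  then have "F' h = y" by (simp add: decomp)
  with y W show ?thesis by (metis span_eq_iff)
qed

text \<open>The differentiated isotropy relations make the terms \<beta>(dX) and \<alpha>(dY) of the Lie
  derivatives cancel against d(\<alpha>(Y) - \<beta>(X)), leaving only the derivatives of the sections
  along each other.\<close>
lemma courant_isotropic_sections:
  fixes s1 s2 :: "real^'m \<Rightarrow> (real^'m) \<times> (real^'m)"
  assumes d1: "(s1 has_derivative s1') (at x)" and d2: "(s2 has_derivative s2') (at x)"
    and iso1: "\<And>h. pairing (s1' h) (s2 x) = 0" and iso2: "\<And>h. pairing (s2' h) (s1 x) = 0"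
  shows "courant s1 s2 x = s2' (fst (s1 x)) - s1' (fst (s2 x))"
proof -
  define X where "X = fst \<circ> s1"
  define a where "a = snd \<circ> s1"
  define Y where "Y = fst \<circ> s2"
  define b where "b = snd \<circ> s2"
  define X' where "X' = fst \<circ> s1'"
  define a' where "a' = snd \<circ> s1'"
  define Y' where "Y' = fst \<circ> s2'"
  define b' where "b' = snd \<circ> s2'"
  have dX: "(X has_derivative X') (at x)" and da: "(a has_derivative a') (at x)"
    and dY: "(Y has_derivative Y') (at x)" and db: "(b has_derivative b') (at x)"
    unfolding X_def a_def Y_def b_def X'_def a'_def Y'_def b'_def
    using has_derivative_fst[OF d1] has_derivative_snd[OF d1]
      has_derivative_fst[OF d2] has_derivative_snd[OF d2] by (simp_all add: o_def)
  have cancel: "b x \<bullet> X' h - a x \<bullet> Y' h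
      + (1/2) * ((a x \<bullet> Y' h + a' h \<bullet> Y x) - (b x \<bullet> X' h + b' h \<bullet> X x)) = 0" for h
    using iso1[of h] iso2[of h]
    by (simp add: pairing_def X_def a_def Y_def b_def X'_def a'_def Y'_def b'_def algebra_simps)
  have dfun_pairing: "dfun (\<lambda>y. a y \<bullet> Y y - b y \<bullet> X y) x
      = (\<chi> i. (a x \<bullet> Y' (axis i 1) + a' (axis i 1) \<bullet> Y x) - (b x \<bullet> X' (axis i 1) + b' (axis i 1) \<bullet> X x))"
    by (rule dfun_eq_partials) (intro has_derivative_diff has_derivative_inner da dY db dX)
  have "lie_deriv_form X b x - lie_deriv_form Y a x
        + (1/2) *\<^sub>R dfun (\<lambda>y. a y \<bullet> Y y - b y \<bullet> X y) x = b' (X x) - a' (Y x)"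
    unfolding dfun_pairing lie_deriv_form_def pderiv_at_def
      frechet_derivative_at[OF dX, symmetric] frechet_derivative_at[OF dY, symmetric]
      frechet_derivative_at[OF da, symmetric] frechet_derivative_at[OF db, symmetric]
  proof (rule iffD2[OF vec_eq_iff], rule allI)
    fix i
    show "(b' (X x) + (\<chi> i. b x \<bullet> X' (axis i 1)) - (a' (Y x) + (\<chi> i. a x \<bullet> Y' (axis i 1)))
        + (1/2) *\<^sub>R (\<chi> i. (a x \<bullet> Y' (axis i 1) + a' (axis i 1) \<bullet> Y x)
                          - (b x \<bullet> X' (axis i 1) + b' (axis i 1) \<bullet> X x))) $ i
        = (b' (X x) - a' (Y x)) $ i"
      using cancel[of "axis i 1"] by (simp add: algebra_simps)
  qed
  moreover have "lie_bracket X Y x = Y' (X x) - X' (Y x)"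
    by (simp add: lie_bracket_def frechet_derivative_at[OF dX, symmetric] frechet_derivative_at[OF dY, symmetric])
  ultimately show ?thesis
    by (simp add: courant_def Let_def X_def a_def Y_def b_def X'_def a'_def Y'_def b'_def prod_eq_iff)
qed

lemma courant_closed_const:
  assumes W: "subspace W" and iso: "isotropic W"
  shows "courant_closed (\<lambda>x::real^'m. W)"
  unfolding courant_closed_def
proof (intro allI impI)
  fix s1 s2 and x :: "real^'m"
  assume s1: "smooth_section (\<lambda>x. W) s1" and s2: "smooth_section (\<lambda>x. W) s2"
  then obtain s1' s2' where d1: "(s1 has_derivative s1') (at x)" and d2: "(s2 has_derivative s2') (at x)"
    using smooth_section_has_derivative by blast
  have in1: "s1 y \<in> W" and in2: "s2 y \<in> W" for y
    using s1 s2 by (simp_all add: smooth_section_def)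
  have d1W: "s1' h \<in> W" and d2W: "s2' h \<in> W" for h
    using has_derivative_in_subspace[OF W in1 d1] has_derivative_in_subspace[OF W in2 d2] by blast+
  have "courant s1 s2 x = s2' (fst (s1 x)) - s1' (fst (s2 x))"
    using iso d1W d2W in1 in2 by (intro courant_isotropic_sections d1 d2) (auto simp: isotropic_def)
  then show "courant s1 s2 x \<in> W"
    using W d1W d2W by (simp add: subspace_diff)
qed

lemma smooth_subbundle_const:
  assumes "subspace W"
  shows "smooth_subbundle (\<lambda>x::real^'m. W)"
  unfolding smooth_subbundle_def
proof (intro conjI allI impI)
  fix x w
  assume "w \<in> W"
  then have "smooth_section (\<lambda>x. W) (\<lambda>y::real^'m. w)"
    by (simp add: smooth_section_def o_def smooth_const)
  then show "\<exists>s. smooth_section (\<lambda>x. W) s \<and> s x = w" by blast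
qed (use assms in simp_all)

lemma big_isotropic_const:
  "subspace W \<Longrightarrow> isotropic W \<Longrightarrow> big_isotropic (\<lambda>x::real^'m. W)"
  by (simp add: big_isotropic_def smooth_subbundle_const courant_closed_const)

text \<open>The swap (X, \<alpha>) \<mapsto> (\<alpha>, X) carries an isotropic V onto a space orthogonal to V,
  so 2 dim V \<le> 2m.\<close>
lemma dim_isotropic_le:
  fixes V :: "((real^'m) \<times> (real^'m)) set"
  assumes "isotropic V"
  shows "dim V \<le> DIM(real^'m)"
proof -
  define swap where "swap = (\<lambda>p::(real^'m) \<times> (real^'m). (snd p, fst p))"
  have "linear swap" unfolding swap_def by (rule linearI) (simp_all add: prod_eq_iff)
  moreover have "inj_on swap (span V)" unfolding swap_def by (rule inj_onI) (simp add: prod_eq_iff)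
  ultimately have dim_swap: "dim (swap ` V) = dim V" by (rule eucl.dim_image_eq)
  have "p \<bullet> swap p' = 0" if "p \<in> V" "p' \<in> V" for p p'
    using assms that by (simp add: isotropic_def swap_def pairing_def inner_prod_def inner_commute)
  then have "p \<bullet> p'' = 0" if "p \<in> V" "p'' \<in> swap ` V" for p p''
    using that by blast
  then have "dim (V \<union> swap ` V) = dim V + dim (swap ` V)"
    by (rule dim_orthogonal_sum)
  moreover have "dim (V \<union> swap ` V) \<le> DIM((real^'m) \<times> (real^'m))"
    by (rule eucl.dim_subset_UNIV)
  ultimately show ?thesis by (simp add: dim_swap DIM_prod)
qed

lemma maximal_isotropic_of_dim:
  fixes W :: "((real^'m) \<times> (real^'m)) set"
  assumes W: "subspace W" and iso: "isotropic W" and dim: "dim W = DIM(real^'m)"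
  shows "maximal_isotropic W"
  unfolding maximal_isotropic_def
proof (intro conjI allI impI iso)
  fix V
  assume V: "subspace V" "W \<subseteq> V" "isotropic V"
  have "dim V \<le> dim W" using dim_isotropic_le[OF V(3)] dim by simp
  then show "V = W" using subspace_dim_equal[OF W V(1,2)] by simp
qed

lemma dirac_const:
  "subspace W \<Longrightarrow> isotropic W \<Longrightarrow> dim W = DIM(real^'m) \<Longrightarrow> dirac (\<lambda>x::real^'m. W)"
  by (simp add: dirac_def big_isotropic_const maximal_isotropic_of_dim)

definition L_fibre :: "real^'m^'m \<Rightarrow> real^'m^'m \<Rightarrow> ((real^'m) \<times> (real^'m)) set" where
  "L_fibre B D = range (\<lambda>z. (B *v z, transpose D *v z))"

lemma esum_pos: "esum u > 0"
  unfolding esum_def by (simp add: add_pos_nonneg sum_nonneg)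

lemma L_BD_eq_L_fibre:
  fixes B D :: "real^'m^'m"
  shows "L_BD B D u = L_fibre B D"
proof -
  have "range (\<lambda>z::real^'m. esum u *\<^sub>R z) = UNIV"
    using esum_pos[of u] by (intro surjI[where f = "\<lambda>z. inverse (esum u) *\<^sub>R z"]) simp
  moreover have "L_BD B D u = (\<lambda>z. (B *v z, transpose D *v z)) ` range (\<lambda>z. esum u *\<^sub>R z)"
    by (simp only: L_BD_def simp_thms full_SetCompr_eq image_image matrix_vector_mult_scaleR)
  ultimately show ?thesis by (simp only: L_fibre_def)
qed

lemma linear_L_fibre_param:
  fixes B D :: "real^'m^'m"
  shows "linear (\<lambda>z. (B *v z, transpose D *v z))"
proof (rule linearI)
  fix z w :: "real^'m"
  show "(B *v (z + w), transpose D *v (z + w)) = (B *v z, transpose D *v z) + (B *v w, transpose D *v w)"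
    by (simp only: matrix_vector_right_distrib add_Pair)
next
  fix c :: real and z :: "real^'m"
  show "(B *v (c *\<^sub>R z), transpose D *v (c *\<^sub>R z)) = c *\<^sub>R (B *v z, transpose D *v z)"
    by (simp only: matrix_vector_mult_scaleR scaleR_Pair)
qed

lemma subspace_L_fibre: "subspace (L_fibre B D)"
  unfolding L_fibre_def by (rule linear_subspace_image[OF linear_L_fibre_param subspace_UNIV])

lemma uminus_matrix_vector_mult: "(- M) *v x = - (M *v x :: real^'n)"
  by (simp add: vec_eq_iff matrix_vector_mult_def sum_negf)

lemma antisymmetric_mat_inner:
  assumes "antisymmetric_mat M"
  shows "z \<bullet> (M *v w) = - (w \<bullet> (M *v z))"
proof -
  have "z \<bullet> (M *v w) = (transpose M *v z) \<bullet> w"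
    by (simp only: inner_transpose_matrix_vector)
  also have "\<dots> = - (w \<bullet> (M *v z))"
    using assms by (simp add: antisymmetric_mat_def uminus_matrix_vector_mult inner_commute)
  finally show ?thesis .
qed

lemma isotropic_L_fibre:
  assumes "antisymmetric_mat (D ** B)"
  shows "isotropic (L_fibre B D)"
proof -
  have "(transpose D *v w) \<bullet> (B *v z) = w \<bullet> (D ** B *v z)" for z w
    by (simp only: inner_transpose_matrix_vector matrix_vector_mul_assoc)
  then have "(transpose D *v w) \<bullet> (B *v z) + (transpose D *v z) \<bullet> (B *v w) = 0" for z w
    using antisymmetric_mat_inner[OF assms, of z w] by simp
  then show ?thesis by (auto simp: isotropic_def L_fibre_def pairing_def)
qed

lemma dim_L_fibre:
  fixes B D :: "real^'m^'m"
  assumes "\<forall>z. B *v z = 0 \<and> transpose D *v z = 0 \<longrightarrow> z = 0"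
  shows "dim (L_fibre B D) = DIM(real^'m)"
proof -
  have "inj_on (\<lambda>z. (B *v z, transpose D *v z)) (span UNIV)"
  proof (rule inj_onI)
    fix z w :: "real^'m"
    assume "(B *v z, transpose D *v z) = (B *v w, transpose D *v w)"
    then have "B *v (z - w) = 0 \<and> transpose D *v (z - w) = 0"
      by (simp only: prod.inject matrix_vector_mult_diff_distrib diff_self)
    then have "z - w = 0" using assms by blast
    then show "z = w" by simp
  qed
  then show ?thesis
    by (simp only: L_fibre_def eucl.dim_image_eq[OF linear_L_fibre_param] eucl.dim_UNIV)
qed

definition H_D_coeff :: "real^'m^'m \<Rightarrow> real^('m option) \<Rightarrow> 'm \<Rightarrow> real" where
  "H_D_coeff D q i = (\<Sum>k\<in>UNIV. D $ k $ i * q $ Some k)"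

definition grad_H_D :: "real^'m^'m \<Rightarrow> real^('m option) \<Rightarrow> real^'m \<Rightarrow> real^'m" where
  "grad_H_D D q u = (\<chi> i. H_D_coeff D q i + (H_D_coeff D q i - D $ i $ i) * exp (u $ i))"

lemma H_D_has_derivative: "(H_D D q has_derivative (\<lambda>v. grad_H_D D q u \<bullet> v)) (at u)"
proof -
  have nth: "((\<lambda>u. u $ i) has_derivative (\<lambda>v. v $ i)) (at u)" for i
    using bounded_linear_vec_nth by (rule bounded_linear_imp_has_derivative)
  have "((\<lambda>u. H_D_coeff D q i * u $ i + (H_D_coeff D q i - D $ i $ i) * exp (u $ i))
      has_derivative (\<lambda>v. grad_H_D D q u $ i * v $ i)) (at u)" for i
    by (auto intro!: derivative_eq_intros nth simp: grad_H_D_def algebra_simps)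
  then have "((\<lambda>u. \<Sum>i\<in>UNIV. H_D_coeff D q i * u $ i + (H_D_coeff D q i - D $ i $ i) * exp (u $ i))
      has_derivative (\<lambda>v. \<Sum>i\<in>UNIV. grad_H_D D q u $ i * v $ i)) (at u)"
    by (rule has_derivative_sum)
  moreover have "H_D D q = (\<lambda>u. \<Sum>i\<in>UNIV. H_D_coeff D q i * u $ i + (H_D_coeff D q i - D $ i $ i) * exp (u $ i))"
    by (simp add: fun_eq_iff H_D_def H_D_coeff_def sum.distrib)
  ultimately show ?thesis by (simp add: inner_vec_def)
qed

lemma dfun_H_D: "dfun (H_D D q) u = grad_H_D D q u"
  by (rule dfun_eq_gradient[OF H_D_has_derivative])

lemma offdiagonal_eq_H_D_coeff:
  assumes "is_diagonal (transpose D ** Q1 q)" and "k \<noteq> i"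
  shows "D $ k $ i = H_D_coeff D q i"
proof -
  have "(transpose D ** Q1 q) $ i $ k = (\<Sum>j\<in>UNIV. D $ j $ i * q $ Some j - (if j = k then D $ j $ i else 0))"
    unfolding matrix_matrix_mult_def transpose_def Q1_def
    by (auto intro!: sum.cong simp: algebra_simps)
  also have "\<dots> = H_D_coeff D q i - D $ k $ i"
    by (simp add: sum_subtractf H_D_coeff_def)
  finally show ?thesis
    using assms unfolding is_diagonal_def by auto
qed

text \<open>Condition (2) in the paper's reading: the 1-form (1 + \<Sum>i. exp u_i) D^t \<eta>_q is exact,
  with primitive H_D.\<close>
lemma esum_transpose_eta_eq_grad_H_D:
  assumes "is_diagonal (transpose D ** Q1 q)"
  shows "esum u *\<^sub>R (transpose D *v eta q u) = grad_H_D D q u"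
proof (rule iffD2[OF vec_eq_iff], rule allI)
  fix i
  let ?c = "H_D_coeff D q i"
  have "(\<Sum>k\<in>UNIV. D $ k $ i * exp (u $ k))
      = (\<Sum>k\<in>UNIV. ?c * exp (u $ k) + (if k = i then (D $ i $ i - ?c) * exp (u $ k) else 0))"
    using offdiagonal_eq_H_D_coeff[OF assms] by (intro sum.cong) (auto simp: algebra_simps)
  also have "\<dots> = ?c * (esum u - 1) + (D $ i $ i - ?c) * exp (u $ i)"
    by (simp add: sum.distrib sum_distrib_left esum_def)
  finally have weighted_exp: "(\<Sum>k\<in>UNIV. D $ k $ i * exp (u $ k))
      = ?c * (esum u - 1) + (D $ i $ i - ?c) * exp (u $ i)" .
  have "(esum u *\<^sub>R (transpose D *v eta q u)) $ i
      = esum u * (\<Sum>k\<in>UNIV. D $ k $ i * (q $ Some k - exp (u $ k) / esum u))"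
    by (simp add: matrix_vector_mult_def transpose_def eta_def)
  also have "\<dots> = esum u * ?c - (\<Sum>k\<in>UNIV. D $ k $ i * exp (u $ k))"
    using esum_pos[of u]
    by (simp add: H_D_coeff_def right_diff_distrib sum_subtractf sum_distrib_left algebra_simps)
  also have "\<dots> = grad_H_D D q u $ i"
    unfolding weighted_exp by (simp add: grad_H_D_def algebra_simps)
  finally show "(esum u *\<^sub>R (transpose D *v eta q u)) $ i = grad_H_D D q u $ i" .
qed

lemma Ytilde_dH_D_mem_L_BD:
  assumes "is_diagonal (transpose D ** Q1 q)"
  shows "(Ytilde A q u, dfun (H_D D q) u) \<in> L_BD (Bmat A) D u"
  unfolding L_BD_def Ytilde_def Xtilde_def dfun_H_D esum_transpose_eta_eq_grad_H_D[OF assms, symmetric]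
  by blast

theorem theorem4p6:
  fixes A :: "real^('m::finite option)^('m option)"
    and q :: "real^('m option)"
    and D :: "real^'m^'m"
  assumes eq: "formal_equilibrium A q"
    and h1: "antisymmetric_mat (D ** Bmat A)"
    and h2: "is_diagonal (transpose D ** Q1 q)"
  shows "big_isotropic (L_BD (Bmat A) D)
       \<and> ((\<forall>z. Bmat A *v z = 0 \<and> transpose D *v z = 0 \<longrightarrow> z = 0) \<longrightarrow> dirac (L_BD (Bmat A) D))
       \<and> (\<forall>u. (H_D D q has_derivative (\<lambda>v. dfun (H_D D q) u \<bullet> v)) (at u)
               \<and> (Ytilde A q u, dfun (H_D D q) u) \<in> L_BD (Bmat A) D u)"
proof -
  have L: "L_BD (Bmat A) D = (\<lambda>u. L_fibre (Bmat A) D)"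
    by (simp add: fun_eq_iff L_BD_eq_L_fibre)
  have "big_isotropic (L_BD (Bmat A) D)"
    unfolding L using subspace_L_fibre isotropic_L_fibre[OF h1] by (rule big_isotropic_const)
  moreover have "dirac (L_BD (Bmat A) D)"
    if "\<forall>z. Bmat A *v z = 0 \<and> transpose D *v z = 0 \<longrightarrow> z = 0"
    unfolding L using subspace_L_fibre isotropic_L_fibre[OF h1] dim_L_fibre[OF that]
    by (rule dirac_const)
  moreover have "(H_D D q has_derivative (\<lambda>v. dfun (H_D D q) u \<bullet> v)) (at u)" for u
    unfolding dfun_H_D by (rule H_D_has_derivative)
  ultimately show ?thesis using Ytilde_dH_D_mem_L_BD[OF h2] by blast
qed

end
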